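(* Fix $\epsilon>0$ and define \[U_1:=\left\{(a,b)\in\bigl([0,1/2)\times[1/2,1)\bigr)\cup\bigl([1/2,1)\times[0,1/2)\bigr):\ a+b<\tfrac34\right\},\] \[U_2:=\left\{(a,b)\in[0,1/2)\times[0,1):\ \tfrac34+\epsilon<a+b<\tfrac54\right\},\] and $U:=U_1\cup U_2\subset\mathbb{R}^2$. Let $x,z\in U$ and let $y^*:=\frac{x+z}{2}$. Then $y^*\neq u+\xi$ for all $u\in U$ and all $\xi\in\{(1/2,1/2),(1/2,0),(0,1/2)\}$. *)

theory Defs
  imports Complex_Main
begin

definition U1 :: "(real \<times> real) set" where
  "U1 = {(a, b). ((0 \<le> a \<and> a < 1/2 \<and> 1/2 \<le> b \<and> b < 1) \<or> (1/2 \<le> a \<and> a < 1 \<and> 0 \<le> b \<and> b < 1/2))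
                 \<and> a + b < 3/4}"

definition U2 :: "real \<Rightarrow> (real \<times> real) set" where
  "U2 \<epsilon> = {(a, b). 0 \<le> a \<and> a < 1/2 \<and> 0 \<le> b \<and> b < 1 \<and> 3/4 + \<epsilon> < a + b \<and> a + b < 5/4}"

definition U :: "real \<Rightarrow> (real \<times> real) set" where
  "U \<epsilon> = U1 \<union> U2 \<epsilon>"

end

theory Submission
  imports Defs
begin

text \<open>Everything is read off the coordinate sum \<open>s(p) = fst p + snd p\<close>, which lies in
  \<open>[1/2, 3/4)\<close> on \<open>U1\<close> and in \<open>(3/4, 5/4)\<close> on \<open>U2 \<epsilon>\<close>. A shift by \<open>(1/2, 1/2)\<close> raises \<open>s\<close>
  beyond \<open>5/4\<close>. A shift by \<open>(1/2, 0)\<close> or \<open>(0, 1/2)\<close> gives \<open>s(y\<^sup>*) \<ge> 1\<close>, which forces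
  \<open>x, z \<in> U2 \<epsilon>\<close> and hence \<open>fst y\<^sup>* < 1/2\<close>. For \<open>(1/2, 0)\<close> this contradicts \<open>fst u \<ge> 0\<close>.
  For \<open>(0, 1/2)\<close> we get \<open>s(u) < 3/4\<close>, so \<open>u \<in> U1\<close> with \<open>fst u < 1/2\<close>, hence \<open>snd u \<ge> 1/2\<close>
  and \<open>snd y\<^sup>* \<ge> 1\<close>, impossible on \<open>U \<epsilon>\<close>.\<close>

lemma U1_sum_less: "p \<in> U1 \<Longrightarrow> fst p + snd p < 3/4"
  unfolding U1_def by auto

lemma U2_sum_greater: "0 \<le> \<epsilon> \<Longrightarrow> p \<in> U2 \<epsilon> \<Longrightarrow> 3/4 < fst p + snd p"
  unfolding U2_def by auto

lemma U2_fst_less_half: "p \<in> U2 \<epsilon> \<Longrightarrow> fst p < 1/2"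
  unfolding U2_def by auto

lemma U1_cases:
  assumes "p \<in> U1"
  obtains "fst p < 1/2" and "1/2 \<le> snd p"
        | "1/2 \<le> fst p" and "snd p < 1/2"
  using assms unfolding U1_def by auto

lemma U_sum_less: "p \<in> U \<epsilon> \<Longrightarrow> fst p + snd p < 5/4"
  unfolding U_def U1_def U2_def by auto

lemma U_sum_ge_half: "0 \<le> \<epsilon> \<Longrightarrow> p \<in> U \<epsilon> \<Longrightarrow> 1/2 \<le> fst p + snd p"
  unfolding U_def U1_def U2_def by auto

lemma U_fst_nonneg: "p \<in> U \<epsilon> \<Longrightarrow> 0 \<le> fst p"
  unfolding U_def U1_def U2_def by auto

lemma U_snd_less_1: "p \<in> U \<epsilon> \<Longrightarrow> snd p < 1"
  unfolding U_def U1_def U2_def by auto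

lemma U_pair_large_sum_in_U2:
  assumes "x \<in> U \<epsilon>" and "z \<in> U \<epsilon>"
    and "2 \<le> (fst x + snd x) + (fst z + snd z)"
  shows "x \<in> U2 \<epsilon>" and "z \<in> U2 \<epsilon>"
proof -
  have "\<not> fst p + snd p < 3/4" if "p \<in> {x, z}" for p
    using that assms U_sum_less by fastforce
  then show "x \<in> U2 \<epsilon>" "z \<in> U2 \<epsilon>"
    using assms(1,2) U1_sum_less unfolding U_def by blast+
qed

lemma midpoint_ne_shift_half_half:
  assumes "0 \<le> \<epsilon>" and "x \<in> U \<epsilon>" and "z \<in> U \<epsilon>" and "u \<in> U \<epsilon>"
  shows "((fst x + fst z) / 2, (snd x + snd z) / 2) \<noteq> (fst u + 1/2, snd u + 1/2)"
  using U_sum_less[OF assms(2)] U_sum_less[OF assms(3)] U_sum_ge_half[OF assms(1,4)]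
  by auto

lemma midpoint_ne_shift_half_0:
  assumes "0 \<le> \<epsilon>" and "x \<in> U \<epsilon>" and "z \<in> U \<epsilon>" and "u \<in> U \<epsilon>"
  shows "((fst x + fst z) / 2, (snd x + snd z) / 2) \<noteq> (fst u + 1/2, snd u)"
proof
  assume mid: "((fst x + fst z) / 2, (snd x + snd z) / 2) = (fst u + 1/2, snd u)"
  then have "fst x < 1/2" and "fst z < 1/2"
    using U_sum_ge_half[OF assms(1,4)] U_pair_large_sum_in_U2[OF assms(2,3)] U2_fst_less_half
    by auto
  then show False
    using mid U_fst_nonneg[OF assms(4)] by auto
qed

lemma midpoint_ne_shift_0_half:
  assumes "0 \<le> \<epsilon>" and "x \<in> U \<epsilon>" and "z \<in> U \<epsilon>" and "u \<in> U \<epsilon>"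
  shows "((fst x + fst z) / 2, (snd x + snd z) / 2) \<noteq> (fst u, snd u + 1/2)"
proof
  assume mid: "((fst x + fst z) / 2, (snd x + snd z) / 2) = (fst u, snd u + 1/2)"
  then have "fst x < 1/2" and "fst z < 1/2"
    using U_sum_ge_half[OF assms(1,4)] U_pair_large_sum_in_U2[OF assms(2,3)] U2_fst_less_half
    by auto
  then have "fst u < 1/2"
    using mid by auto
  moreover have "u \<in> U1"
    using mid U_sum_less[OF assms(2)] U_sum_less[OF assms(3)] assms(4) U2_sum_greater[OF assms(1)]
    unfolding U_def by fastforce
  ultimately have "1/2 \<le> snd u"
    by (auto elim: U1_cases)
  then show False
    using mid U_snd_less_1[OF assms(2)] U_snd_less_1[OF assms(3)] by auto
qed

theorem lemma4p5:
  fixes \<epsilon> :: real and x z u \<xi> :: "real \<times> real"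
  assumes "\<epsilon> > 0"
    and "x \<in> U \<epsilon>" and "z \<in> U \<epsilon>"
    and "u \<in> U \<epsilon>"
    and "\<xi> \<in> {(1/2, 1/2), (1/2, 0), (0, 1/2)}"
  shows "((fst x + fst z) / 2, (snd x + snd z) / 2) \<noteq> (fst u + fst \<xi>, snd u + snd \<xi>)"
proof -
  have "0 \<le> \<epsilon>" using assms(1) by simp
  from assms(5) consider "\<xi> = (1/2, 1/2)" | "\<xi> = (1/2, 0)" | "\<xi> = (0, 1/2)" by blast
  then show ?thesis
  proof cases
    case 1
    then show ?thesis using midpoint_ne_shift_half_half[OF \<open>0 \<le> \<epsilon>\<close> assms(2-4)] by simp
  next
    case 2
    then show ?thesis using midpoint_ne_shift_half_0[OF \<open>0 \<le> \<epsilon>\<close> assms(2-4)] by simp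
  next
    case 3
    then show ?thesis using midpoint_ne_shift_0_half[OF \<open>0 \<le> \<epsilon>\<close> assms(2-4)] by simp
  qed
qed

end
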